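(* Let $n\ge 4$, let $K'\subseteq[k]$ with $|K'|\ge n$, let $\pi$ assign to each $n$-element subset $S\subseteq[k]$ a string $\pi(S)$ of length $n$ that is an ordering of $S$, and suppose every $(n-1)$-element subset $R\subseteq K'$ is semi-frozen, with a fixed choice of semi-freezing function $h_R$ and wildcard index $w_R$. Let $Q\subseteq K'$ with $|Q|=n-2$, let $R,R'\subseteq K'$ be distinct $(n-1)$-element sets containing $Q$, let $r$ be the element of $R\setminus Q$ and $r'$ the element of $R'\setminus Q$. Suppose there exist distinct $q,q'\in Q$ with $h_R(q)\ne h_{R'}(q)$ and $h_R(q')\ne h_{R'}(q')$. Then, after possibly interchanging the names of $q$ and $q'$: (1) $h_R(q)=h_{R'}(r')$ and $h_R(r)=h_{R'}(q')$; (2) $h_R(q')=w_{R'}$ and $h_{R'}(q)=w_R$; (3) $h_R(q'')=h_{R'}(q'')$ for every $q''\in Q\setminus\{q,q'\}$.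
   Context: $[k]=\{1,\dots,k\}$; $\pi(S)[i]$ is the letter at position $i\in[n]$ of $\pi(S)$. For a set $R\subseteq[k]$, $\mathcal U_R$ is the set of all sets $S\subseteq[k]$ with $R\subset S$ and $|S|=|R|+1$. A set $R$ with $|R|=n-1$ is semi-frozen with semi-freezing function $h_R$ and wildcard index $w_R$ if $h_R:R\to[n]$ is one-to-one, $w_R$ is the unique index of $[n]$ not in the image of $h_R$, and for every $r\in R$ and every $S\in\mathcal U_R$, either $\pi(S)[h_R(r)]=r$ or $\pi(S)[w_R]=r$. *)

theory Defs
  imports Main
begin

text \<open>Strings of letters are lists; positions are 1-based, so the letter at
position i of a string s is s ! (i - 1).\<close>

definition letter_at :: "nat list \<Rightarrow> nat \<Rightarrow> nat" where
  "letter_at s i = s ! (i - 1)"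

definition U_sets :: "nat \<Rightarrow> nat set \<Rightarrow> nat set set" where
  "U_sets k R = {S. S \<subseteq> {1..k} \<and> R \<subset> S \<and> card S = card R + 1}"

definition semi_frozen ::
  "nat \<Rightarrow> nat \<Rightarrow> (nat set \<Rightarrow> nat list) \<Rightarrow> nat set \<Rightarrow> (nat \<Rightarrow> nat) \<Rightarrow> nat \<Rightarrow> bool" where
  "semi_frozen k n \<pi> R h w \<longleftrightarrow>
     card R = n - 1 \<and>
     inj_on h R \<and> h ` R \<subseteq> {1..n} \<and>
     {1..n} - h ` R = {w} \<and>
     (\<forall>r\<in>R. \<forall>S\<in>U_sets k R.
        letter_at (\<pi> S) (h r) = r \<or> letter_at (\<pi> S) w = r)"

end

theory Submission
  imports Defs
begin

text \<open>Everything happens inside the single string \<pi>(R \<union> R'), which lies in both U_R and U_R'.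
  Read as a map s from positions to letters, it is injective, and in a semi-frozen set at most
  one element x is displaced (s (h x) \<noteq> x), namely the letter at the wildcard position.
  An element of Q whose positions under h_R and h_R' differ must be displaced in R or in R';
  so q is displaced in one set and q' in the other. The letter displaced from its place is then
  forced into the wildcard position of the other set, its old position in R carries the letter
  r' (the only letter of R \<union> R' outside R), and symmetrically for R'.\<close>

definition semi_frozen_in :: "(nat \<Rightarrow> nat) \<Rightarrow> nat \<Rightarrow> nat set \<Rightarrow> (nat \<Rightarrow> nat) \<Rightarrow> nat \<Rightarrow> bool" where
  "semi_frozen_in s n R h w \<longleftrightarrow>
     inj_on h R \<and> h ` R \<subseteq> {1..n} \<and> {1..n} - h ` R = {w} \<and>
     (\<forall>x\<in>R. s (h x) = x \<or> s w = x)"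

lemma semi_frozen_imp_semi_frozen_in:
  assumes "semi_frozen k n \<pi> R h w" and "S \<in> U_sets k R"
  shows "semi_frozen_in (letter_at (\<pi> S)) n R h w"
  using assms unfolding semi_frozen_def semi_frozen_in_def by blast

lemma insert_in_U_sets:
  assumes "finite R" and "insert x R \<subseteq> {1..k}" and "x \<notin> R"
  shows "insert x R \<in> U_sets k R"
  using assms unfolding U_sets_def by auto

lemma inj_on_letter_at:
  assumes "distinct xs" and "length xs = n"
  shows "inj_on (letter_at xs) {1..n}"
proof
  fix i j assume i: "i \<in> {1..n}" and j: "j \<in> {1..n}" and "letter_at xs i = letter_at xs j"
  then have "i - 1 = j - 1"
    using assms nth_eq_iff_index_eq unfolding letter_at_def by fastforce
  then show "i = j" using i j by auto
qed

lemma letter_at_image: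
  assumes "length xs = n"
  shows "letter_at xs ` {1..n} \<subseteq> set xs"
  using assms unfolding letter_at_def by auto

lemma semi_frozen_in_positions:
  assumes "semi_frozen_in s n R h w"
  shows "w \<in> {1..n}" and "x \<in> R \<Longrightarrow> h x \<in> {1..n}"
  using assms unfolding semi_frozen_in_def by blast+

lemma semi_frozen_in_displaced:
  assumes "semi_frozen_in s n R h w" and "x \<in> R" and "s (h x) \<noteq> x"
  shows "s w = x"
  using assms unfolding semi_frozen_in_def by blast

lemma semi_frozen_in_displaced_unique:
  assumes "semi_frozen_in s n R h w" and "a \<in> R" and "s (h a) \<noteq> a"
    and "x \<in> R" and "x \<noteq> a"
  shows "s (h x) = x"
  using assms semi_frozen_in_displaced by metis

lemma semi_frozen_in_displaced_letter:
  assumes s: "inj_on s {1..n}" "s ` {1..n} \<subseteq> insert r' R"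
    and F: "semi_frozen_in s n R h w" and a: "a \<in> R" "s (h a) \<noteq> a"
  shows "s (h a) = r'"
proof (rule ccontr)
  assume "s (h a) \<noteq> r'"
  then have x: "s (h a) \<in> R"
    using s(2) semi_frozen_in_positions(2)[OF F a(1)] by blast
  with a F have "s (h (s (h a))) = s (h a)"
    using semi_frozen_in_displaced_unique by metis
  then have "h (s (h a)) = h a"
    using s(1) x a(1) F by (meson inj_onD semi_frozen_in_positions(2))
  then have "s (h a) = a"
    using F x a(1) unfolding semi_frozen_in_def by (meson inj_onD)
  with a(2) show False ..
qed

lemma semi_frozen_in_moved_imp_displaced:
  assumes "inj_on s {1..n}" and F: "semi_frozen_in s n R h w" and F': "semi_frozen_in s n R' h' w'"
    and "x \<in> R" "x \<in> R'" and "h x \<noteq> h' x"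
  shows "s (h x) \<noteq> x \<or> s (h' x) \<noteq> x"
  using assms semi_frozen_in_positions(2)[OF F] semi_frozen_in_positions(2)[OF F']
  by (metis inj_onD)

lemma semi_frozen_in_swap:
  assumes s: "inj_on s {1..n}" "s ` {1..n} \<subseteq> R \<union> R'"
    and RQ: "R = insert r Q" and R'Q: "R' = insert r' Q" and rr': "r \<notin> R'" "r' \<notin> R"
    and F: "semi_frozen_in s n R h w" and F': "semi_frozen_in s n R' h' w'"
    and a: "a \<in> Q" "s (h a) \<noteq> a" and b: "b \<in> Q" "s (h' b) \<noteq> b" and "a \<noteq> b"
  shows "h a = h' r' \<and> h r = h' b \<and> h b = w' \<and> h' a = w \<and>
         (\<forall>x\<in>Q - {a, b}. h x = h' x)"
proof -
  have fixed: "\<And>x. x \<in> R \<Longrightarrow> x \<noteq> a \<Longrightarrow> s (h x) = x"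
    using semi_frozen_in_displaced_unique[OF F] a RQ by blast
  have fixed': "\<And>x. x \<in> R' \<Longrightarrow> x \<noteq> b \<Longrightarrow> s (h' x) = x"
    using semi_frozen_in_displaced_unique[OF F'] b R'Q by blast
  have wild: "s w = a" and wild': "s w' = b"
    using semi_frozen_in_displaced F F' a b RQ R'Q by blast+
  have pos: "\<And>x. x \<in> R \<Longrightarrow> h x \<in> {1..n}" "\<And>x. x \<in> R' \<Longrightarrow> h' x \<in> {1..n}"
    "w \<in> {1..n}" "w' \<in> {1..n}"
    using semi_frozen_in_positions F F' by blast+
  have same_pos: "\<And>i j. i \<in> {1..n} \<Longrightarrow> j \<in> {1..n} \<Longrightarrow> s i = s j \<Longrightarrow> i = j"
    using s(1) by (meson inj_onD)
  have "s (h a) = r'" and "s (h' b) = r"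
    using semi_frozen_in_displaced_letter[OF s(1) _ F] semi_frozen_in_displaced_letter[OF s(1) _ F']
      s(2) a b RQ R'Q by (auto simp: insert_commute)
  moreover have "s (h' r') = r'" and "s (h r) = r"
    using fixed fixed' a b RQ R'Q rr' by auto
  ultimately have "h a = h' r'" and "h r = h' b"
    using same_pos pos a b RQ R'Q by (metis insertCI)+
  moreover have "h' a = w" and "h b = w'"
    using same_pos pos fixed fixed' wild wild' a b RQ R'Q \<open>a \<noteq> b\<close> by auto
  moreover have "\<forall>x\<in>Q - {a, b}. h x = h' x"
    using same_pos pos fixed fixed' RQ R'Q by auto
  ultimately show ?thesis by blast
qed

lemma semi_frozen_in_pair:
  assumes s: "inj_on s {1..n}" "s ` {1..n} \<subseteq> R \<union> R'"
    and RQ: "R = insert r Q" and R'Q: "R' = insert r' Q" and rr': "r \<notin> R'" "r' \<notin> R"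
    and F: "semi_frozen_in s n R h w" and F': "semi_frozen_in s n R' h' w'"
    and q: "q \<in> Q" "q' \<in> Q" "q \<noteq> q'" and moved: "h q \<noteq> h' q" "h q' \<noteq> h' q'"
  shows "\<exists>(a, b) \<in> {(q, q'), (q', q)}.
           h a = h' r' \<and> h r = h' b \<and> h b = w' \<and> h' a = w \<and>
           (\<forall>x\<in>Q - {q, q'}. h x = h' x)"
proof -
  have "s (h q) \<noteq> q \<or> s (h' q) \<noteq> q" and "s (h q') \<noteq> q' \<or> s (h' q') \<noteq> q'"
    using semi_frozen_in_moved_imp_displaced[OF s(1) F F'] moved q RQ R'Q by blast+
  moreover have "\<not> (s (h q) \<noteq> q \<and> s (h q') \<noteq> q')" and "\<not> (s (h' q) \<noteq> q \<and> s (h' q') \<noteq> q')"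
    using semi_frozen_in_displaced_unique[OF F] semi_frozen_in_displaced_unique[OF F'] q RQ R'Q
    by blast+
  ultimately consider "s (h q) \<noteq> q" "s (h' q') \<noteq> q'" | "s (h q') \<noteq> q'" "s (h' q) \<noteq> q"
    by blast
  then show ?thesis
  proof cases
    case 1
    then show ?thesis
      using semi_frozen_in_swap[OF s RQ R'Q rr' F F' q(1) _ q(2)] q(3) by auto
  next
    case 2
    then show ?thesis
      using semi_frozen_in_swap[OF s RQ R'Q rr' F F' q(2) _ q(1)] q(3) by (auto simp: insert_commute)
  qed
qed

theorem lemma3p13:
  fixes k n :: nat
    and Kp Q R R' :: "nat set"
    and \<pi> :: "nat set \<Rightarrow> nat list"
    and H :: "nat set \<Rightarrow> nat \<Rightarrow> nat"
    and W :: "nat set \<Rightarrow> nat"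
    and r r' q q' :: nat
  assumes n4: "n \<ge> 4"
    and Kp_sub: "Kp \<subseteq> {1..k}"
    and Kp_card: "card Kp \<ge> n"
    and pi_ord: "\<And>S. S \<subseteq> {1..k} \<Longrightarrow> card S = n \<Longrightarrow>
                   length (\<pi> S) = n \<and> distinct (\<pi> S) \<and> set (\<pi> S) = S"
    and semi: "\<And>T. T \<subseteq> Kp \<Longrightarrow> card T = n - 1 \<Longrightarrow> semi_frozen k n \<pi> T (H T) (W T)"
    and Q_sub: "Q \<subseteq> Kp" and Q_card: "card Q = n - 2"
    and R_sub: "R \<subseteq> Kp" and R_card: "card R = n - 1" and QR: "Q \<subseteq> R"
    and R'_sub: "R' \<subseteq> Kp" and R'_card: "card R' = n - 1" and QR': "Q \<subseteq> R'"
    and RR': "R \<noteq> R'"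
    and r_def: "R - Q = {r}" and r'_def: "R' - Q = {r'}"
    and qQ: "q \<in> Q" and q'Q: "q' \<in> Q" and qq': "q \<noteq> q'"
    and hq: "H R q \<noteq> H R' q" and hq': "H R q' \<noteq> H R' q'"
  shows "\<exists>(a, b) \<in> {(q, q'), (q', q)}.
           H R a = H R' r' \<and> H R r = H R' b \<and>
           H R b = W R' \<and> H R' a = W R \<and>
           (\<forall>q''\<in>Q - {q, q'}. H R q'' = H R' q'')"
proof -
  have RQ: "R = insert r Q" and R'Q: "R' = insert r' Q"
    using r_def r'_def QR QR' by blast+
  then have rR': "r \<notin> R'" and r'R: "r' \<notin> R"
    using r_def r'_def RR' by blast+
  have fin: "finite R" "finite R'"
    using R_card R'_card n4 card.infinite by fastforce+
  define S where "S = R \<union> R'"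
  have S_ins: "S = insert r' R" "S = insert r R'"
    using S_def RQ R'Q by auto
  have Sk: "S \<subseteq> {1..k}"
    using S_def R_sub R'_sub Kp_sub by auto
  have "card S = n"
    using S_ins fin r'R R_card n4 by simp
  then obtain "length (\<pi> S) = n" "distinct (\<pi> S)" "set (\<pi> S) = S"
    using pi_ord Sk by blast
  moreover have "semi_frozen_in (letter_at (\<pi> S)) n R (H R) (W R)"
    "semi_frozen_in (letter_at (\<pi> S)) n R' (H R') (W R')"
    using semi_frozen_imp_semi_frozen_in semi R_sub R_card R'_sub R'_card
      insert_in_U_sets fin Sk S_ins rR' r'R by metis+
  ultimately show ?thesis
    using semi_frozen_in_pair[OF inj_on_letter_at _ RQ R'Q rR' r'R] letter_at_image S_def qQ q'Q qq' hq hq'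
    by blast
qed

end
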